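(* The following two statements are equivalent: (a) Every 3-connected cubic graph $G$ admits a proper $5$-edge-coloring $c$ with $|N_G(c)|\le 7$. (b) There exists a sublinear function $f:\mathbb{N}\to\mathbb{N}$ such that every 3-connected cubic graph $G$ admits a proper $5$-edge-coloring $c$ with $|N_G(c)|\le f(|V(G)|)$.
   Context: Graphs are finite, undirected, loopless, and may contain parallel edges. A proper $k$-edge-coloring of $G$ is a map $c:E(G)\to\{1,\dots,k\}$ with adjacent edges receiving different colors. For such $c$ and a vertex $v$, $S_c(v)$ is the set of colors on edges incident to $v$. An edge $uv$ of a cubic graph is poor if $|S_c(u)\cup S_c(v)|=3$, rich if $|S_c(u)\cup S_c(v)|=5$, and abnormal if it is neither poor nor rich. $N_G(c)$ denotes the set of abnormal edges of $G$ with respect to $c$. A function $f:\mathbb{N}\to\mathbb{N}$ is sublinear if $\lim_{n\to\infty} f(n)/n=0$. *)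

theory Defs
  imports Complex_Main
begin

text \<open>Parallel edges are distinct elements of E with the same ends.\<close>

definition multigraph :: "'v set \<Rightarrow> 'e set \<Rightarrow> ('e \<Rightarrow> 'v set) \<Rightarrow> bool" where
  "multigraph V E ends \<longleftrightarrow> finite V \<and> finite E \<and>
     (\<forall>e\<in>E. ends e \<subseteq> V \<and> card (ends e) = 2)"

definition inc_edges :: "'e set \<Rightarrow> ('e \<Rightarrow> 'v set) \<Rightarrow> 'v \<Rightarrow> 'e set" where
  "inc_edges E ends v = {e \<in> E. v \<in> ends e}"

definition cubic :: "'v set \<Rightarrow> 'e set \<Rightarrow> ('e \<Rightarrow> 'v set) \<Rightarrow> bool" where
  "cubic V E ends \<longleftrightarrow> multigraph V E ends \<and> (\<forall>v\<in>V. card (inc_edges E ends v) = 3)"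

definition adj_in :: "'v set \<Rightarrow> 'e set \<Rightarrow> ('e \<Rightarrow> 'v set) \<Rightarrow> ('v \<times> 'v) set" where
  "adj_in W E ends = {(u, v). u \<in> W \<and> v \<in> W \<and> (\<exists>e\<in>E. ends e = {u, v})}"

definition connected_induced :: "'v set \<Rightarrow> 'e set \<Rightarrow> ('e \<Rightarrow> 'v set) \<Rightarrow> bool" where
  "connected_induced W E ends \<longleftrightarrow> W \<noteq> {} \<and> (\<forall>u\<in>W. \<forall>v\<in>W. (u, v) \<in> (adj_in W E ends)\<^sup>*)"

definition k_connected :: "nat \<Rightarrow> 'v set \<Rightarrow> 'e set \<Rightarrow> ('e \<Rightarrow> 'v set) \<Rightarrow> bool" where
  "k_connected k V E ends \<longleftrightarrow> multigraph V E ends \<and> card V > k \<and>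
     (\<forall>X \<subseteq> V. card X < k \<longrightarrow> connected_induced (V - X) E ends)"

definition proper_edge_coloring :: "nat \<Rightarrow> 'e set \<Rightarrow> ('e \<Rightarrow> 'v set) \<Rightarrow> ('e \<Rightarrow> nat) \<Rightarrow> bool" where
  "proper_edge_coloring k E ends c \<longleftrightarrow>
     (\<forall>e\<in>E. c e \<in> {1..k}) \<and>
     (\<forall>e\<in>E. \<forall>e'\<in>E. e \<noteq> e' \<and> ends e \<inter> ends e' \<noteq> {} \<longrightarrow> c e \<noteq> c e')"

definition color_set :: "'e set \<Rightarrow> ('e \<Rightarrow> 'v set) \<Rightarrow> ('e \<Rightarrow> nat) \<Rightarrow> 'v \<Rightarrow> nat set" where
  "color_set E ends c v = c ` inc_edges E ends v"

definition poor_edge :: "'e set \<Rightarrow> ('e \<Rightarrow> 'v set) \<Rightarrow> ('e \<Rightarrow> nat) \<Rightarrow> 'e \<Rightarrow> bool" where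
  "poor_edge E ends c e \<longleftrightarrow> card (\<Union>x\<in>ends e. color_set E ends c x) = 3"

definition rich_edge :: "'e set \<Rightarrow> ('e \<Rightarrow> 'v set) \<Rightarrow> ('e \<Rightarrow> nat) \<Rightarrow> 'e \<Rightarrow> bool" where
  "rich_edge E ends c e \<longleftrightarrow> card (\<Union>x\<in>ends e. color_set E ends c x) = 5"

definition abnormal_edges :: "'e set \<Rightarrow> ('e \<Rightarrow> 'v set) \<Rightarrow> ('e \<Rightarrow> nat) \<Rightarrow> 'e set" where
  "abnormal_edges E ends c = {e \<in> E. \<not> poor_edge E ends c e \<and> \<not> rich_edge E ends c e}"

definition sublinear :: "(nat \<Rightarrow> nat) \<Rightarrow> bool" where
  "sublinear f \<longleftrightarrow> (\<lambda>n. real (f n) / real n) \<longlonglongrightarrow> 0"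

end

theory Submission
  imports Defs "HOL-Library.Countable"
begin

text \<open>
  Only (b) implies (a) needs an argument. Suppose G is 3-connected and cubic, and every proper
  5-edge-colouring of G has at least eight abnormal edges; fix a vertex v of G. Replacing every
  vertex b of a 3-connected cubic graph B by a copy of G - v, and attaching the three edges of B
  at b to the three neighbours of v in that copy, gives a 3-connected cubic graph H with
  |V(B)| (|V(G)| - 1) vertices. A colouring of H restricted to one copy extends to a colouring
  of G by recolouring the three edges at v, the edge towards the first neighbour taking the
  colour of the corresponding edge of H; then only the at most seven edges at v and at the two
  other neighbours can change their status. So every copy contains an abnormal edge, and every
  colouring of H has at least |V(H)| / (|V(G)| - 1) abnormal edges. Iterating the construction
  gives such graphs H of arbitrarily large order, contradicting any sublinear bound.
\<close>

definition other_end :: "('e \<Rightarrow> 'v set) \<Rightarrow> 'v \<Rightarrow> 'e \<Rightarrow> 'v" where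
  "other_end ends v e = the_elem (ends e - {v})"

lemma other_end_eq: "ends e = {x, y} \<Longrightarrow> x \<noteq> y \<Longrightarrow> other_end ends x e = y"
  unfolding other_end_def by (metis Diff_insert_absorb insert_Diff_if singletonD the_elem_eq insertI1)

lemma mem_inc_edges [simp]: "e \<in> inc_edges E ends v \<longleftrightarrow> e \<in> E \<and> v \<in> ends e"
  unfolding inc_edges_def by simp

lemma multigraph_edge_ends:
  assumes "multigraph V E ends" "e \<in> E"
  obtains x y where "ends e = {x, y}" "x \<noteq> y" "x \<in> V" "y \<in> V"
  using assms unfolding multigraph_def by (metis card_2_iff insert_subset)

lemma multigraph_inc_edge:
  assumes "multigraph V E ends" "e \<in> inc_edges E ends v"
  shows "ends e = {v, other_end ends v e}" "other_end ends v e \<noteq> v"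
    "other_end ends v e \<in> V" "v \<in> V"
proof -
  obtain x y where xy: "ends e = {x, y}" "x \<noteq> y" "x \<in> V" "y \<in> V"
    using assms by (auto elim: multigraph_edge_ends)
  have "v = x \<or> v = y" using assms(2) xy by auto
  then show "ends e = {v, other_end ends v e}" "other_end ends v e \<noteq> v"
    "other_end ends v e \<in> V" "v \<in> V"
    using xy other_end_eq[of ends e x y] other_end_eq[of ends e y x] by (auto simp: insert_commute)
qed

lemma finite_inc_edges: "multigraph V E ends \<Longrightarrow> finite (inc_edges E ends v)"
  unfolding multigraph_def inc_edges_def by auto

lemma cubic_multigraph: "cubic V E ends \<Longrightarrow> multigraph V E ends"
  unfolding cubic_def by auto

lemma card_inc_edges_cubic: "cubic V E ends \<Longrightarrow> v \<in> V \<Longrightarrow> card (inc_edges E ends v) = 3"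
  unfolding cubic_def by auto

lemma k_connected_card: "k_connected k V E ends \<Longrightarrow> k < card V"
  unfolding k_connected_def by auto

lemma k_connected_connected_induced:
  "k_connected k V E ends \<Longrightarrow> X \<subseteq> V \<Longrightarrow> card X < k \<Longrightarrow> connected_induced (V - X) E ends"
  unfolding k_connected_def by auto

lemma connected_induced_reach:
  "connected_induced W E ends \<Longrightarrow> u \<in> W \<Longrightarrow> w \<in> W \<Longrightarrow> (u, w) \<in> (adj_in W E ends)\<^sup>*"
  unfolding connected_induced_def by blast

lemma proper_edge_coloringD:
  assumes "proper_edge_coloring k E ends c" "e \<in> E" "e' \<in> E" "e \<noteq> e'" "x \<in> ends e" "x \<in> ends e'"
  shows "c e \<noteq> c e'"
  using assms unfolding proper_edge_coloring_def by blast

lemma adj_in_sym: "(a, b) \<in> adj_in W E ends \<Longrightarrow> (b, a) \<in> adj_in W E ends"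
  unfolding adj_in_def by (auto simp: insert_commute)

lemma rtrancl_adj_in_sym: "(a, b) \<in> (adj_in W E ends)\<^sup>* \<Longrightarrow> (b, a) \<in> (adj_in W E ends)\<^sup>*"
  by (induction rule: rtrancl_induct) (auto intro: converse_rtrancl_into_rtrancl adj_in_sym)

lemma rtrancl_map:
  assumes "(a, b) \<in> R\<^sup>*" "\<And>x y. (x, y) \<in> R \<Longrightarrow> (h x, h y) \<in> S"
  shows "(h a, h b) \<in> S\<^sup>*"
  using assms(1) by (induction rule: rtrancl_induct) (auto intro: rtrancl_into_rtrancl assms(2))

lemma connected_induced_neighbour:
  assumes "connected_induced W E ends" "w \<in> W" "z \<in> W" "z \<noteq> w"
  obtains e t where "e \<in> E" "ends e = {w, t}" "t \<in> W"
proof -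
  have "(w, z) \<in> (adj_in W E ends)\<^sup>*" using assms connected_induced_reach by metis
  then obtain t where "(w, t) \<in> adj_in W E ends" using assms(4) by (metis converse_rtranclE)
  then show ?thesis using that unfolding adj_in_def by auto
qed

lemma three_connected_cubic_no_parallel_edges:
  assumes cub: "cubic V E ends" and con: "k_connected 3 V E ends"
    and e: "e \<in> E" "e' \<in> E" "ends e = ends e'"
  shows "e = e'"
proof (rule ccontr)
  assume "e \<noteq> e'"
  have mg: "multigraph V E ends" using cub cubic_multigraph by blast
  obtain u w where uw: "ends e = {u, w}" "u \<noteq> w" "w \<in> V"
    using mg e(1) by (auto elim: multigraph_edge_ends)
  have ee': "{e, e'} \<subseteq> inc_edges E ends w" using e uw by auto
  have "\<not> inc_edges E ends w \<subseteq> {e, e'}"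
  proof
    assume "inc_edges E ends w \<subseteq> {e, e'}"
    then have "card (inc_edges E ends w) \<le> card {e, e'}" by (intro card_mono) auto
    also have "\<dots> \<le> 2" by (simp add: card_insert_if)
    finally show False using card_inc_edges_cubic[OF cub uw(3)] by simp
  qed
  then obtain k where k: "k \<in> inc_edges E ends w" "k \<notin> {e, e'}" by blast
  have three: "inc_edges E ends w = {e, e', k}"
    using ee' k \<open>e \<noteq> e'\<close> card_inc_edges_cubic[OF cub uw(3)] finite_inc_edges[OF mg]
    by (intro card_seteq[symmetric]) auto
  let ?w' = "other_end ends w k"
  have k_ends: "ends k = {w, ?w'}" "?w' \<noteq> w" "?w' \<in> V" using multigraph_inc_edge[OF mg k(1)] by auto
  \<comment> \<open>Removing u and the third neighbour of w leaves w without neighbours.\<close>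
  define X where "X = {u, ?w'}"
  have "X \<subseteq> V" using uw k_ends e mg unfolding X_def multigraph_def by auto
  moreover have "card X < 3" unfolding X_def by (simp add: card_insert_if)
  ultimately have conX: "connected_induced (V - X) E ends"
    by (rule k_connected_connected_induced[OF con])
  have "card V - card X \<le> card (V - X)" by (rule diff_card_le_card_Diff) (simp add: X_def)
  then have "card (V - X) \<ge> 2" using k_connected_card[OF con] \<open>card X < 3\<close> by linarith
  moreover have "card (V - X) \<le> 1" if "V - X \<subseteq> {w}"
    using card_mono[OF _ that] by simp
  ultimately obtain z where z: "z \<in> V - X" "z \<noteq> w" by fastforce
  have "w \<in> V - X" using uw k_ends uw(3) unfolding X_def by auto
  then obtain g t where g: "g \<in> E" "ends g = {w, t}" "t \<in> V - X"
    using connected_induced_neighbour[OF conX _ z] by metis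
  then have "g \<in> {e, e', k}" using three by auto
  then show False using g uw k_ends e(3) unfolding X_def by (auto simp: doubleton_eq_iff)
qed

lemma inj_on_other_end:
  assumes "cubic V E ends" "k_connected 3 V E ends"
  shows "inj_on (other_end ends v) (inc_edges E ends v)"
proof (rule inj_onI)
  fix e e' assume e: "e \<in> inc_edges E ends v" "e' \<in> inc_edges E ends v"
    and eq: "other_end ends v e = other_end ends v e'"
  have "multigraph V E ends" using assms(1) cubic_multigraph by blast
  then have "ends e = ends e'" using multigraph_inc_edge(1) e eq by metis
  then show "e = e'" using three_connected_cubic_no_parallel_edges[OF assms] e by auto
qed

text \<open>Moves the replacement graph below, built on product and sum types, to a graph on nat.\<close>

locale graph_copy =
  fixes V :: "'v set" and E :: "'e set" and ends :: "'e \<Rightarrow> 'v set"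
    and \<phi> :: "'v \<Rightarrow> 'w" and \<psi> :: "'e \<Rightarrow> 'f" and ends' :: "'f \<Rightarrow> 'w set"
  assumes inj_\<phi>: "inj \<phi>" and inj_\<psi>: "inj \<psi>" and ends'_\<psi>: "\<And>e. ends' (\<psi> e) = \<phi> ` ends e"
begin

lemma multigraph: "multigraph V E ends \<Longrightarrow> multigraph (\<phi> ` V) (\<psi> ` E) ends'"
  unfolding multigraph_def using ends'_\<psi> inj_\<phi>
  by (auto simp: card_image inj_on_subset[OF inj_\<phi>] image_mono)

lemma inc_edges: "inc_edges (\<psi> ` E) ends' (\<phi> x) = \<psi> ` inc_edges E ends x"
  unfolding inc_edges_def using ends'_\<psi> inj_\<phi> by (auto simp: inj_image_mem_iff)

lemma cubic: "cubic V E ends \<Longrightarrow> cubic (\<phi> ` V) (\<psi> ` E) ends'"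
  unfolding cubic_def using multigraph inc_edges inj_\<psi>
  by (auto simp: card_image inj_on_subset[OF inj_\<psi>])

lemma adj_in: "(a, b) \<in> adj_in W E ends \<Longrightarrow> (\<phi> a, \<phi> b) \<in> adj_in (\<phi> ` W) (\<psi> ` E) ends'"
  unfolding adj_in_def using ends'_\<psi> by auto (metis image_empty image_insert)

lemma connected_induced:
  assumes "connected_induced W E ends"
  shows "connected_induced (\<phi> ` W) (\<psi> ` E) ends'"
  unfolding connected_induced_def
proof (intro conjI ballI)
  show "\<phi> ` W \<noteq> {}" using assms unfolding connected_induced_def by simp
next
  fix u' w' assume "u' \<in> \<phi> ` W" "w' \<in> \<phi> ` W"
  then obtain u w where "u \<in> W" "w \<in> W" "u' = \<phi> u" "w' = \<phi> w" by blast
  then show "(u', w') \<in> (adj_in (\<phi> ` W) (\<psi> ` E) ends')\<^sup>*"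
    using rtrancl_map[OF connected_induced_reach[OF assms] adj_in] by simp
qed

lemma k_connected:
  assumes con: "k_connected k V E ends"
  shows "k_connected k (\<phi> ` V) (\<psi> ` E) ends'"
proof -
  have "connected_induced (\<phi> ` V - X') (\<psi> ` E) ends'" if X': "X' \<subseteq> \<phi> ` V" "card X' < k" for X'
  proof -
    obtain X where X: "X \<subseteq> V" "X' = \<phi> ` X" using X' subset_image_iff by metis
    then have "card X < k" using X' inj_\<phi> by (simp add: card_image inj_on_subset)
    then have "connected_induced (\<phi> ` (V - X)) (\<psi> ` E) ends'"
      using k_connected_connected_induced[OF con X(1)] connected_induced by blast
    then show ?thesis using X inj_\<phi> by (simp add: image_set_diff)
  qed
  moreover have "card (\<phi> ` V) = card V" using inj_\<phi> by (simp add: card_image inj_on_subset)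
  ultimately show ?thesis using con multigraph unfolding k_connected_def by auto
qed

lemma proper_edge_coloring:
  assumes "proper_edge_coloring k (\<psi> ` E) ends' c"
  shows "proper_edge_coloring k E ends (c \<circ> \<psi>)"
  unfolding proper_edge_coloring_def
proof (intro conjI ballI impI)
  fix e e' assume "e \<in> E" "e' \<in> E" "e \<noteq> e' \<and> ends e \<inter> ends e' \<noteq> {}"
  moreover from this have "ends' (\<psi> e) \<inter> ends' (\<psi> e') \<noteq> {}" unfolding ends'_\<psi> by blast
  ultimately show "(c \<circ> \<psi>) e \<noteq> (c \<circ> \<psi>) e'"
    using assms inj_\<psi> unfolding proper_edge_coloring_def by (auto simp: inj_eq)
qed (use assms in \<open>auto simp: proper_edge_coloring_def\<close>)

lemma color_set: "color_set E ends (c \<circ> \<psi>) x = color_set (\<psi> ` E) ends' c (\<phi> x)"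
  unfolding color_set_def inc_edges by (simp add: image_comp)

lemma card_abnormal_edges:
  "card (abnormal_edges (\<psi> ` E) ends' c) = card (abnormal_edges E ends (c \<circ> \<psi>))"
proof -
  have "(\<Union>x\<in>ends' (\<psi> e). color_set (\<psi> ` E) ends' c x) = (\<Union>x\<in>ends e. color_set E ends (c \<circ> \<psi>) x)"
    for e unfolding ends'_\<psi> color_set by simp
  then have "abnormal_edges (\<psi> ` E) ends' c = \<psi> ` abnormal_edges E ends (c \<circ> \<psi>)"
    unfolding abnormal_edges_def poor_edge_def rich_edge_def by auto
  then show ?thesis using inj_\<psi> by (simp add: card_image inj_on_subset)
qed

end

lemma reach_neighbour_avoiding:
  assumes con: "k_connected 3 V E ends" and v: "v \<in> V"
    and Y: "Y \<subseteq> V - {v}" "card Y \<le> 2" and z: "z \<in> V - {v} - Y"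
  obtains e where "e \<in> inc_edges E ends v" "other_end ends v e \<notin> Y"
    "(z, other_end ends v e) \<in> (adj_in (V - {v} - Y) E ends)\<^sup>*"
proof -
  let ?R = "adj_in (V - {v} - Y) E ends"
  have "connected_induced (V - Y) E ends" using Y by (intro k_connected_connected_induced[OF con]) auto
  then have "(z, v) \<in> (adj_in (V - Y) E ends)\<^sup>*" by (rule connected_induced_reach) (use z v Y in auto)
  then have "z \<noteq> v \<longrightarrow> (\<exists>e\<in>inc_edges E ends v. other_end ends v e \<notin> Y \<and> (z, other_end ends v e) \<in> ?R\<^sup>*)"
  proof (induction rule: converse_rtrancl_induct)
    case base
    show ?case by simp
  next
    case (step z y)
    from step(1) obtain g where g: "g \<in> E" "ends g = {z, y}" "z \<in> V - Y" "y \<in> V - Y"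
      unfolding adj_in_def by auto
    show ?case
    proof
      assume "z \<noteq> v"
      show "\<exists>e\<in>inc_edges E ends v. other_end ends v e \<notin> Y \<and> (z, other_end ends v e) \<in> ?R\<^sup>*"
      proof (cases "y = v")
        case True
        then have "ends g = {v, z}" "g \<in> inc_edges E ends v" using g by auto
        then have "other_end ends v g = z" "g \<in> inc_edges E ends v"
          using other_end_eq \<open>z \<noteq> v\<close> by metis+
        then show ?thesis using g by auto
      next
        case False
        then obtain e where e: "e \<in> inc_edges E ends v" "other_end ends v e \<notin> Y"
          "(y, other_end ends v e) \<in> ?R\<^sup>*" using step(3) by blast
        have "(z, y) \<in> ?R" using g \<open>z \<noteq> v\<close> False unfolding adj_in_def by auto
        then show ?thesis using e by (meson converse_rtrancl_into_rtrancl)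
      qed
    qed
  qed
  then obtain e where "e \<in> inc_edges E ends v" "other_end ends v e \<notin> Y" "(z, other_end ends v e) \<in> ?R\<^sup>*"
    using z by blast
  then show thesis by (rule that)
qed

lemma card_fibre_le_1:
  assumes "inj_on f A"
  shows "card {a \<in> A. f a = x} \<le> 1"
proof (cases "finite {a \<in> A. f a = x}")
  case True
  have "\<forall>a\<in>{a \<in> A. f a = x}. \<forall>b\<in>{a \<in> A. f a = x}. a = b"
    using assms unfolding inj_on_def by auto
  then show ?thesis using card_le_Suc0_iff_eq[OF True] by simp
qed simp

lemma exists_avoiding_two_values:
  assumes "finite A" "3 \<le> card A" "inj_on g A" "inj_on h A"
  obtains a where "a \<in> A" "g a \<noteq> y" "h a \<noteq> z"
proof -
  define S where "S = {a \<in> A. g a = y} \<union> {a \<in> A. h a = z}"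
  have "card S < card A"
    using card_Un_le[of "{a \<in> A. g a = y}" "{a \<in> A. h a = z}"] assms(2)
      card_fibre_le_1[OF assms(3), of y] card_fibre_le_1[OF assms(4), of z]
    unfolding S_def by linarith
  moreover have "card A \<le> card S" if "A \<subseteq> S"
    using that assms(1) by (intro card_mono) (auto simp: S_def)
  ultimately have "\<not> A \<subseteq> S" by (meson not_le)
  then obtain a where "a \<in> A" "a \<notin> S" by blast
  then show ?thesis using that unfolding S_def by blast
qed

lemma free_colour:
  assumes "finite A" "card A < k"
  obtains g :: nat where "g \<in> {1..k}" "g \<notin> A"
proof -
  have "\<not> {1..k} \<subseteq> A"
  proof
    assume "{1..k} \<subseteq> A"
    then have "card {1..k} \<le> card A" by (rule card_mono[OF assms(1)])
    then show False using assms(2) by simp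
  qed
  then show ?thesis using that by blast
qed

lemma card_inc_edges_Diff_le_2:
  assumes "cubic V E ends" "e \<in> inc_edges E ends v"
  shows "card (inc_edges E ends (other_end ends v e) - inc_edges E ends v) \<le> 2"
proof -
  let ?x = "other_end ends v e"
  have mg: "multigraph V E ends" using assms(1) by (rule cubic_multigraph)
  have "e \<in> inc_edges E ends ?x" "?x \<in> V" using multigraph_inc_edge[OF mg assms(2)] assms(2) by auto
  then have "card (inc_edges E ends ?x - {e}) = 2"
    using card_inc_edges_cubic[OF assms(1)] finite_inc_edges[OF mg] by simp
  moreover have "inc_edges E ends ?x - inc_edges E ends v \<subseteq> inc_edges E ends ?x - {e}" using assms(2) by auto
  ultimately show ?thesis using card_mono finite_inc_edges[OF mg] by (metis finite_Diff)
qed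

lemma card_edges_near_vertex:
  assumes cub: "cubic V E ends" and v: "v \<in> V"
    and e: "e \<in> inc_edges E ends v" "e' \<in> inc_edges E ends v"
  shows "card (inc_edges E ends v \<union> inc_edges E ends (other_end ends v e) \<union>
    inc_edges E ends (other_end ends v e')) \<le> 7"
proof -
  let ?I = "inc_edges E ends"
  let ?x = "other_end ends v e" and ?y = "other_end ends v e'"
  have split: "?I v \<union> ?I ?x \<union> ?I ?y = ?I v \<union> (?I ?x - ?I v) \<union> (?I ?y - ?I v)" by blast
  show ?thesis unfolding split
    using card_Un_le[of "?I v \<union> (?I ?x - ?I v)" "?I ?y - ?I v"] card_Un_le[of "?I v" "?I ?x - ?I v"]
      card_inc_edges_cubic[OF cub v] card_inc_edges_Diff_le_2[OF cub e(1)] card_inc_edges_Diff_le_2[OF cub e(2)]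
    by linarith
qed

lemma proper_edge_coloring_Un:
  assumes "proper_edge_coloring k A ends c" "proper_edge_coloring k B ends c"
    and "\<And>e e' w. e \<in> A \<Longrightarrow> e' \<in> B \<Longrightarrow> w \<in> ends e \<Longrightarrow> w \<in> ends e' \<Longrightarrow> c e \<noteq> c e'"
  shows "proper_edge_coloring k (A \<union> B) ends c"
  unfolding proper_edge_coloring_def
proof (intro conjI ballI impI)
  fix e e' assume e: "e \<in> A \<union> B" "e' \<in> A \<union> B" "e \<noteq> e' \<and> ends e \<inter> ends e' \<noteq> {}"
  then obtain w where "w \<in> ends e" "w \<in> ends e'" by blast
  then show "c e \<noteq> c e'"
    using e assms(1,2) assms(3)[of e e' w] assms(3)[of e' e w] unfolding proper_edge_coloring_def by (metis UnE)
qed (use assms in \<open>auto simp: proper_edge_coloring_def\<close>)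

lemma extend_coloring_at_vertex:
  fixes c\<^sub>0 :: "'e \<Rightarrow> nat"
  assumes cub: "cubic V E ends"
    and I: "inc_edges E ends v = {e\<^sub>1, e\<^sub>2, e\<^sub>3}" "e\<^sub>1 \<noteq> e\<^sub>2" "e\<^sub>2 \<noteq> e\<^sub>3" "e\<^sub>1 \<noteq> e\<^sub>3"
    and c\<^sub>0: "proper_edge_coloring 5 (E - inc_edges E ends v) ends c\<^sub>0"
    and d: "d \<in> {1..5}"
      "d \<notin> c\<^sub>0 ` (inc_edges E ends (other_end ends v e\<^sub>1) - inc_edges E ends v)"
  obtains c where "proper_edge_coloring 5 E ends c" "\<forall>e\<in>E - inc_edges E ends v. c e = c\<^sub>0 e" "c e\<^sub>1 = d"
proof -
  let ?I = "inc_edges E ends v"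
  define F where "F e = c\<^sub>0 ` (inc_edges E ends (other_end ends v e) - ?I)" for e
  have F: "finite (F e)" "card (F e) \<le> 2" if "e \<in> ?I" for e
    using card_inc_edges_Diff_le_2[OF cub that] finite_inc_edges[OF cubic_multigraph[OF cub]]
    unfolding F_def by (auto intro: order_trans[OF card_image_le])
  have "e\<^sub>2 \<in> ?I" "e\<^sub>3 \<in> ?I" using I(1) by auto
  then have "finite (insert d (F e\<^sub>2))" "card (insert d (F e\<^sub>2)) < 5"
    "finite (insert d (insert g (F e\<^sub>3)))" "card (insert d (insert g (F e\<^sub>3))) < 5" for g
    using F[OF \<open>e\<^sub>2 \<in> ?I\<close>] F[OF \<open>e\<^sub>3 \<in> ?I\<close>] by (auto simp: card_insert_if)
  then obtain g\<^sub>2 g\<^sub>3 where g\<^sub>2: "g\<^sub>2 \<in> {1..5}" "g\<^sub>2 \<notin> insert d (F e\<^sub>2)"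
    and g\<^sub>3: "g\<^sub>3 \<in> {1..5}" "g\<^sub>3 \<notin> insert d (insert g\<^sub>2 (F e\<^sub>3))"
    by (meson free_colour)
  define c where "c e = (if e = e\<^sub>1 then d else if e = e\<^sub>2 then g\<^sub>2 else if e = e\<^sub>3 then g\<^sub>3 else c\<^sub>0 e)" for e
  have c_outside: "c e = c\<^sub>0 e" if "e \<notin> ?I" for e using that I(1) unfolding c_def by auto
  have "proper_edge_coloring 5 ?I ends c"
    using I d(1) g\<^sub>2 g\<^sub>3 unfolding proper_edge_coloring_def c_def by auto
  moreover have "proper_edge_coloring 5 (E - ?I) ends c"
    using c\<^sub>0 c_outside unfolding proper_edge_coloring_def by auto
  moreover have "c e \<noteq> c e'" if "e \<in> ?I" "e' \<in> E - ?I" "w \<in> ends e" "w \<in> ends e'" for e e' w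
  proof -
    have "w \<noteq> v" using that by auto
    then have "w = other_end ends v e"
      using multigraph_inc_edge(1)[OF cubic_multigraph[OF cub] that(1)] that(3) by auto
    then have "c e' \<in> F e" using that c_outside unfolding F_def by auto
    moreover have "c e \<notin> F e" using that(1) I g\<^sub>2 g\<^sub>3 d(2) unfolding c_def F_def by auto
    ultimately show ?thesis by auto
  qed
  ultimately have "proper_edge_coloring 5 (?I \<union> (E - ?I)) ends c" by (rule proper_edge_coloring_Un)
  moreover have "?I \<union> (E - ?I) = E" by auto
  moreover have "c e\<^sub>1 = d" unfolding c_def by simp
  ultimately show ?thesis using that c_outside by auto
qed

section \<open>Replacing the vertices of B by copies of G - v\<close>

text \<open>The vertex (b, x) of H is the copy of x replacing b. Its edges are Inl (b, e) for the
  edges e of G - v and Inr f for the edges f of B, which join the ports of f in the copies of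
  its two ends; the port of f in copy b is the neighbour of v along the edge \<sigma> b f.\<close>

locale vertex_replacement =
  fixes VG :: "'v set" and EG :: "'e set" and endsG :: "'e \<Rightarrow> 'v set" and v :: 'v
    and VB :: "'b set" and EB :: "'f set" and endsB :: "'f \<Rightarrow> 'b set" and \<sigma> :: "'b \<Rightarrow> 'f \<Rightarrow> 'e"
  assumes cubic_G: "cubic VG EG endsG" and connected_G: "k_connected 3 VG EG endsG" and v: "v \<in> VG"
    and cubic_B: "cubic VB EB endsB" and connected_B: "k_connected 3 VB EB endsB"
    and bij_\<sigma>: "\<And>b. b \<in> VB \<Longrightarrow> bij_betw (\<sigma> b) (inc_edges EB endsB b) (inc_edges EG endsG v)"
begin

abbreviation "IG \<equiv> inc_edges EG endsG"
abbreviation "IB \<equiv> inc_edges EB endsB"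

definition port :: "'b \<Rightarrow> 'f \<Rightarrow> 'b \<times> 'v" where
  "port b f = (b, other_end endsG v (\<sigma> b f))"

definition VH :: "('b \<times> 'v) set" where
  "VH = VB \<times> (VG - {v})"

definition EH :: "('b \<times> 'e + 'f) set" where
  "EH = Inl ` (VB \<times> (EG - IG v)) \<union> Inr ` EB"

fun endsH :: "'b \<times> 'e + 'f \<Rightarrow> ('b \<times> 'v) set" where
  "endsH (Inl (b, e)) = Pair b ` endsG e"
| "endsH (Inr f) = (\<lambda>b. port b f) ` endsB f"

definition port_edges :: "'b \<Rightarrow> 'v \<Rightarrow> 'f set" where
  "port_edges b x = {f \<in> IB b. other_end endsG v (\<sigma> b f) = x}"

lemma multigraph_G: "multigraph VG EG endsG"
  using cubic_G by (rule cubic_multigraph)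

lemma multigraph_B: "multigraph VB EB endsB"
  using cubic_B by (rule cubic_multigraph)

lemma \<sigma>_edge:
  assumes "b \<in> VB" "f \<in> IB b"
  shows "\<sigma> b f \<in> IG v" "endsG (\<sigma> b f) = {v, other_end endsG v (\<sigma> b f)}"
    "other_end endsG v (\<sigma> b f) \<noteq> v" "other_end endsG v (\<sigma> b f) \<in> VG"
  using bij_betw_apply[OF bij_\<sigma>[OF assms(1)] assms(2)] multigraph_inc_edge[OF multigraph_G] by blast+

lemma \<sigma>_surj:
  assumes "b \<in> VB" "e \<in> IG v"
  obtains f where "f \<in> IB b" "\<sigma> b f = e"
proof -
  have "e \<in> \<sigma> b ` IB b" using bij_betw_imp_surj_on[OF bij_\<sigma>[OF assms(1)]] assms(2) by simp
  then show ?thesis using that by blast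
qed

lemma port_in_VH: "b \<in> VB \<Longrightarrow> f \<in> IB b \<Longrightarrow> port b f \<in> VH"
  using \<sigma>_edge unfolding port_def VH_def by auto

lemma endsH_edge:
  assumes "h \<in> EH"
  shows "endsH h \<subseteq> VH" "card (endsH h) = 2"
proof -
  consider (copy) b e where "h = Inl (b, e)" "b \<in> VB" "e \<in> EG - IG v"
    | (link) f where "h = Inr f" "f \<in> EB" using assms unfolding EH_def by auto
  then have "endsH h \<subseteq> VH \<and> card (endsH h) = 2"
  proof cases
    case copy
    have "endsG e \<subseteq> VG - {v}" "card (endsG e) = 2" using copy multigraph_G unfolding multigraph_def by auto
    then show ?thesis using copy unfolding VH_def by (auto simp: card_image inj_on_def)
  next
    case link
    obtain b\<^sub>1 b\<^sub>2 where b: "endsB f = {b\<^sub>1, b\<^sub>2}" "b\<^sub>1 \<noteq> b\<^sub>2" "b\<^sub>1 \<in> VB" "b\<^sub>2 \<in> VB"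
      using multigraph_B link(2) by (auto elim: multigraph_edge_ends)
    then have "port b\<^sub>1 f \<in> VH" "port b\<^sub>2 f \<in> VH" "port b\<^sub>1 f \<noteq> port b\<^sub>2 f"
      using port_in_VH link(2) unfolding port_def by auto
    then show ?thesis using link b by auto
  qed
  then show "endsH h \<subseteq> VH" "card (endsH h) = 2" by auto
qed

lemma multigraph_H: "multigraph VH EH endsH"
  using multigraph_G multigraph_B endsH_edge unfolding VH_def EH_def multigraph_def by auto

lemma inc_edges_H:
  assumes "b \<in> VB"
  shows "inc_edges EH endsH (b, x) = (\<lambda>e. Inl (b, e)) ` (IG x - IG v) \<union> Inr ` port_edges b x"
  using assms unfolding inc_edges_def EH_def port_edges_def by (auto simp: port_def)

lemma \<sigma>_port_edges:
  assumes "b \<in> VB" "x \<noteq> v"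
  shows "\<sigma> b ` port_edges b x = IG x \<inter> IG v"
proof
  show "\<sigma> b ` port_edges b x \<subseteq> IG x \<inter> IG v"
    using \<sigma>_edge[OF assms(1)] unfolding port_edges_def by auto
next
  show "IG x \<inter> IG v \<subseteq> \<sigma> b ` port_edges b x"
  proof
    fix e assume e: "e \<in> IG x \<inter> IG v"
    then obtain f where f: "f \<in> IB b" "\<sigma> b f = e" using \<sigma>_surj[OF assms(1)] by blast
    then have "x = other_end endsG v (\<sigma> b f)" using e assms(2) \<sigma>_edge[OF assms(1) f(1)] by auto
    then show "e \<in> \<sigma> b ` port_edges b x" using f unfolding port_edges_def by auto
  qed
qed

lemma card_port_edges:
  assumes "b \<in> VB" "x \<noteq> v"
  shows "card (port_edges b x) = card (IG x \<inter> IG v)"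
proof -
  have "inj_on (\<sigma> b) (port_edges b x)"
    using bij_\<sigma>[OF assms(1)] unfolding bij_betw_def port_edges_def by (auto intro: inj_on_subset)
  then show ?thesis using \<sigma>_port_edges[OF assms] card_image by metis
qed

lemma cubic_H: "cubic VH EH endsH"
  unfolding cubic_def
proof (intro conjI ballI multigraph_H)
  fix p assume "p \<in> VH"
  then obtain b x where p: "p = (b, x)" "b \<in> VB" "x \<in> VG" "x \<noteq> v" unfolding VH_def by auto
  have fin: "finite (IG x)" "finite (IB b)"
    using finite_inc_edges[OF multigraph_G] finite_inc_edges[OF multigraph_B] by blast+
  have "finite (port_edges b x)" unfolding port_edges_def by (rule finite_subset[OF _ fin(2)]) auto
  then have "card (inc_edges EH endsH p) = card (IG x - IG v) + card (port_edges b x)"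
    unfolding p inc_edges_H[OF p(2)] using fin
    by (subst card_Un_disjoint) (auto simp: card_image inj_on_def)
  also have "\<dots> = card (IG x)"
    using card_port_edges[OF p(2,4)] card_Int_Diff[OF fin(1), of "IG v"] by simp
  finally show "card (inc_edges EH endsH p) = 3" using card_inc_edges_cubic[OF cubic_G p(3)] by simp
qed

lemma card_VH: "card VH = card VB * (card VG - 1)"
  using v multigraph_G unfolding VH_def multigraph_def by (simp add: card_cartesian_product)

section \<open>3-connectivity of the replacement\<close>

lemma path_in_copy:
  assumes b: "b \<in> VB" and Y: "\<And>y. (b, y) \<in> X \<Longrightarrow> y \<in> Y"
    and path: "(x, x') \<in> (adj_in (VG - {v} - Y) EG endsG)\<^sup>*"
  shows "((b, x), (b, x')) \<in> (adj_in (VH - X) EH endsH)\<^sup>*"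
proof (rule rtrancl_map[OF path])
  fix y y' assume "(y, y') \<in> adj_in (VG - {v} - Y) EG endsG"
  then obtain e where e: "e \<in> EG" "endsG e = {y, y'}" "y \<in> VG - {v} - Y" "y' \<in> VG - {v} - Y"
    unfolding adj_in_def by auto
  then have "Inl (b, e) \<in> EH" "endsH (Inl (b, e)) = {(b, y), (b, y')}" using b unfolding EH_def by auto
  moreover have "(b, y) \<in> VH - X" "(b, y') \<in> VH - X" using e b Y unfolding VH_def by auto
  ultimately show "((b, y), (b, y')) \<in> adj_in (VH - X) EH endsH" unfolding adj_in_def by blast
qed

lemma adj_port_edge:
  assumes f: "f \<in> EB" "endsB f = {b\<^sub>1, b\<^sub>2}" and X: "port b\<^sub>1 f \<notin> X" "port b\<^sub>2 f \<notin> X"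
  shows "(port b\<^sub>1 f, port b\<^sub>2 f) \<in> adj_in (VH - X) EH endsH"
proof -
  have "b\<^sub>1 \<in> VB" "b\<^sub>2 \<in> VB" using f multigraph_B unfolding multigraph_def by auto
  then have "port b\<^sub>1 f \<in> VH" "port b\<^sub>2 f \<in> VH" using port_in_VH f by auto
  moreover have "Inr f \<in> EH" "endsH (Inr f) = {port b\<^sub>1 f, port b\<^sub>2 f}" using f unfolding EH_def by auto
  ultimately show ?thesis using X unfolding adj_in_def by blast
qed

lemma card_fst_image_lt_3:
  assumes "X \<subseteq> VH" "card X < 3"
  shows "card (fst ` X) < 3"
  using assms card_image_le[of X fst] finite_subset[OF assms(1)] multigraph_H
  unfolding multigraph_def by fastforce

lemma intact_copies_connected:
  assumes X: "X \<subseteq> VH" "card X < 3"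
    and b: "b\<^sub>1 \<in> VB - fst ` X" "b\<^sub>2 \<in> VB - fst ` X" and x: "x\<^sub>1 \<in> VG - {v}" "x\<^sub>2 \<in> VG - {v}"
  shows "((b\<^sub>1, x\<^sub>1), (b\<^sub>2, x\<^sub>2)) \<in> (adj_in (VH - X) EH endsH)\<^sup>*"
proof -
  let ?R = "adj_in (VH - X) EH endsH"
  have conG: "connected_induced (VG - {v}) EG endsG"
    using v by (intro k_connected_connected_induced[OF connected_G]) auto
  have in_copy: "((b, y), (b, y')) \<in> ?R\<^sup>*" if "b \<in> VB - fst ` X" "y \<in> VG - {v}" "y' \<in> VG - {v}" for b y y'
    using that connected_induced_reach[OF conG] by (intro path_in_copy[of b X "{}"]) force+
  have "fst ` X \<subseteq> VB" using X unfolding VH_def by auto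
  then have "connected_induced (VB - fst ` X) EB endsB"
    using card_fst_image_lt_3[OF X] by (intro k_connected_connected_induced[OF connected_B])
  then have "(b\<^sub>1, b\<^sub>2) \<in> (adj_in (VB - fst ` X) EB endsB)\<^sup>*"
    using b by (intro connected_induced_reach)
  then have "\<forall>x\<^sub>2 \<in> VG - {v}. ((b\<^sub>1, x\<^sub>1), (b\<^sub>2, x\<^sub>2)) \<in> ?R\<^sup>*"
  proof (induction rule: rtrancl_induct)
    case base
    then show ?case using in_copy b x by auto
  next
    case (step b b')
    from step(2) obtain f where f: "f \<in> EB" "endsB f = {b, b'}" "b \<in> VB - fst ` X" "b' \<in> VB - fst ` X"
      unfolding adj_in_def by auto
    then have "port b f \<in> VH" "port b' f \<in> VH" using port_in_VH by auto
    then have ports: "fst (port b f) = b" "snd (port b f) \<in> VG - {v}"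
      "fst (port b' f) = b'" "snd (port b' f) \<in> VG - {v}" unfolding port_def VH_def by auto
    have "port b f \<notin> X" "port b' f \<notin> X" using f ports by force+
    then have link: "(port b f, port b' f) \<in> ?R" using adj_port_edge f by blast
    show ?case
    proof
      fix y assume "y \<in> VG - {v}"
      then have "((b\<^sub>1, x\<^sub>1), port b f) \<in> ?R\<^sup>*" "(port b' f, (b', y)) \<in> ?R\<^sup>*"
        using step(3) in_copy[OF f(4)] ports by (metis prod.collapse)+
      then show "((b\<^sub>1, x\<^sub>1), (b', y)) \<in> ?R\<^sup>*" using link by (meson rtrancl_into_rtrancl rtrancl_trans)
    qed
  qed
  then show ?thesis using x by auto
qed

lemma leave_copy:
  assumes X: "X \<subseteq> VH" and b: "b \<in> VB" and f: "f \<in> IB b" "other_end endsB b f \<notin> fst ` X"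
    and Y: "\<And>y. (b, y) \<in> X \<Longrightarrow> y \<in> Y" "other_end endsG v (\<sigma> b f) \<notin> Y"
    and path: "(x, other_end endsG v (\<sigma> b f)) \<in> (adj_in (VG - {v} - Y) EG endsG)\<^sup>*"
  obtains b' x' where "b' \<in> VB - fst ` X" "x' \<in> VG - {v}" "((b, x), (b', x')) \<in> (adj_in (VH - X) EH endsH)\<^sup>*"
proof -
  let ?R = "adj_in (VH - X) EH endsH"
  define b' where "b' = other_end endsB b f"
  have b': "endsB f = {b, b'}" "b' \<in> VB" "f \<in> IB b'"
    using multigraph_inc_edge[OF multigraph_B f(1)] f(1) unfolding b'_def by auto
  have "port b f \<notin> X" "port b' f \<notin> X" using Y(1,2) f(2) unfolding port_def b'_def by force+
  then have "(port b f, port b' f) \<in> ?R" using adj_port_edge b' f(1) by auto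
  moreover have "((b, x), port b f) \<in> ?R\<^sup>*" using path_in_copy[OF b Y(1) path] unfolding port_def .
  moreover have "port b' f \<in> VH" using port_in_VH b' by auto
  then have "port b' f = (b', snd (port b' f))" "snd (port b' f) \<in> VG - {v}"
    unfolding port_def VH_def by auto
  ultimately show ?thesis using that f(2) b' unfolding b'_def by (metis DiffI rtrancl_into_rtrancl)
qed

lemma leave_copy_damaged_inside:
  assumes X: "X \<subseteq> VH" "card X < 3" "\<forall>q\<in>X. fst q = b" and bx: "(b, x) \<in> VH - X"
  obtains b' x' where "b' \<in> VB - fst ` X" "x' \<in> VG - {v}" "((b, x), (b', x')) \<in> (adj_in (VH - X) EH endsH)\<^sup>*"
proof -
  define Y where "Y = {y. (b, y) \<in> X}"
  have "Y \<subseteq> snd ` X" unfolding Y_def by force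
  moreover have fin: "finite X" using X(1) multigraph_H finite_subset unfolding multigraph_def by blast
  ultimately have "card Y \<le> card (snd ` X)" by (intro card_mono) auto
  also have "\<dots> \<le> card X" using fin by (rule card_image_le)
  finally have "card Y \<le> 2" using X(2) by linarith
  moreover have "Y \<subseteq> VG - {v}" "x \<in> VG - {v} - Y" using X bx unfolding Y_def VH_def by auto
  ultimately obtain e where e: "e \<in> IG v" "other_end endsG v e \<notin> Y"
    "(x, other_end endsG v e) \<in> (adj_in (VG - {v} - Y) EG endsG)\<^sup>*"
    using reach_neighbour_avoiding[OF connected_G v] by blast
  have b: "b \<in> VB" using bx unfolding VH_def by auto
  obtain f where f: "f \<in> IB b" "\<sigma> b f = e" using \<sigma>_surj[OF b e(1)] .
  have "other_end endsB b f \<noteq> b" using multigraph_inc_edge[OF multigraph_B f(1)] by blast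
  then have "other_end endsB b f \<notin> fst ` X" using X(3) by auto
  then show ?thesis
    by (rule leave_copy[OF X(1) b f(1) _ _ _ _ that, where Y = Y]) (use e f(2) in \<open>auto simp: Y_def\<close>)
qed

lemma leave_copy_damaged_elsewhere:
  assumes X: "X \<subseteq> VH" "card X < 3" and q: "q \<in> X" "fst q \<noteq> b" and y\<^sub>0: "(b, y\<^sub>0) \<in> X"
    and bx: "(b, x) \<in> VH - X"
  obtains b' x' where "b' \<in> VB - fst ` X" "x' \<in> VG - {v}" "((b, x), (b', x')) \<in> (adj_in (VH - X) EH endsH)\<^sup>*"
proof -
  have fin: "finite X" using X(1) multigraph_H finite_subset unfolding multigraph_def by blast
  have "q \<noteq> (b, y\<^sub>0)" using q(2) by auto
  then have "card X \<le> card {q, (b, y\<^sub>0)}" using X(2) by simp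
  then have X_eq: "X = {q, (b, y\<^sub>0)}" using card_seteq[OF fin] q(1) y\<^sub>0 by (metis empty_subsetI insert_subset)
  have b: "b \<in> VB" and x: "x \<in> VG - {v, y\<^sub>0}" and y\<^sub>0V: "y\<^sub>0 \<in> VG" "y\<^sub>0 \<noteq> v"
    using bx y\<^sub>0 X(1) unfolding X_eq VH_def by auto
  have "inj_on (other_end endsG v) (\<sigma> b ` IB b)"
    using inj_on_other_end[OF cubic_G connected_G] bij_betw_imp_surj_on[OF bij_\<sigma>[OF b]] by simp
  then have "inj_on (other_end endsG v \<circ> \<sigma> b) (IB b)"
    using bij_\<sigma>[OF b] unfolding bij_betw_def by (simp add: comp_inj_on)
  \<comment> \<open>Some edge at b leads neither to copy fst q nor to the deleted vertex of copy b,
    as B and G have no parallel edges.\<close>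
  then obtain f where f: "f \<in> IB b" "other_end endsB b f \<noteq> fst q" "other_end endsG v (\<sigma> b f) \<noteq> y\<^sub>0"
    using exists_avoiding_two_values[OF finite_inc_edges[OF multigraph_B]]
      card_inc_edges_cubic[OF cubic_B b] inj_on_other_end[OF cubic_B connected_B] by (metis comp_apply order_refl)
  have "other_end endsB b f \<noteq> b" using multigraph_inc_edge[OF multigraph_B f(1)] by blast
  then have fX: "other_end endsB b f \<notin> fst ` X" using f(2) unfolding X_eq by auto
  have "connected_induced (VG - {v, y\<^sub>0}) EG endsG"
    using v y\<^sub>0V by (intro k_connected_connected_induced[OF connected_G]) (auto simp: card_insert_if)
  moreover have "other_end endsG v (\<sigma> b f) \<in> VG - {v, y\<^sub>0}" using \<sigma>_edge[OF b f(1)] f(3) by auto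
  ultimately have path: "(x, other_end endsG v (\<sigma> b f)) \<in> (adj_in (VG - {v} - {y\<^sub>0}) EG endsG)\<^sup>*"
    using x connected_induced_reach by (metis Diff_insert2)
  show ?thesis
    by (rule leave_copy[OF X(1) b f(1) fX _ _ path that]) (use f(3) q(2) in \<open>auto simp: X_eq\<close>)
qed

lemma reach_intact_copy:
  assumes X: "X \<subseteq> VH" "card X < 3" and p: "p \<in> VH - X"
  obtains b' x' where "b' \<in> VB - fst ` X" "x' \<in> VG - {v}" "(p, (b', x')) \<in> (adj_in (VH - X) EH endsH)\<^sup>*"
proof -
  obtain b x where bx: "p = (b, x)" "b \<in> VB" "x \<in> VG - {v}" using p unfolding VH_def by auto
  have p': "(b, x) \<in> VH - X" using p bx(1) by simp
  consider "b \<notin> fst ` X" | "\<forall>q\<in>X. fst q = b" | y\<^sub>0 q where "(b, y\<^sub>0) \<in> X" "q \<in> X" "fst q \<noteq> b"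
    by force
  then have "\<exists>b' x'. b' \<in> VB - fst ` X \<and> x' \<in> VG - {v} \<and> ((b, x), (b', x')) \<in> (adj_in (VH - X) EH endsH)\<^sup>*"
  proof cases
    case 1
    then show ?thesis using bx by blast
  next
    case 2
    show ?thesis by (rule leave_copy_damaged_inside[OF X 2 p']) blast
  next
    case 3
    show ?thesis by (rule leave_copy_damaged_elsewhere[OF X 3(2,3,1) p']) blast
  qed
  then show ?thesis using that bx(1) by blast
qed

lemma three_connected_H: "k_connected 3 VH EH endsH"
  unfolding k_connected_def
proof (intro conjI allI impI multigraph_H)
  have "card VB > 3" "card VG > 3" using k_connected_card connected_B connected_G by blast+
  then have "card VB * 1 \<le> card VB * (card VG - 1)" by (intro mult_le_mono2) linarith
  then show "card VH > 3" unfolding card_VH using \<open>card VB > 3\<close> by linarith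
next
  fix X assume X: "X \<subseteq> VH" "card X < 3"
  let ?R = "adj_in (VH - X) EH endsH"
  have "\<not> VB \<subseteq> fst ` X"
    using card_fst_image_lt_3[OF X] k_connected_card[OF connected_B] card_mono[of "fst ` X" VB]
      finite_subset[OF X(1)] multigraph_H unfolding multigraph_def by fastforce
  then obtain b where b: "b \<in> VB - fst ` X" by blast
  have "card (VG - {v}) \<noteq> 0" using k_connected_card[OF connected_G] v by simp
  then obtain x where "x \<in> VG - {v}" by (metis card.empty ex_in_conv)
  then have "(b, x) \<in> VH - X" using b unfolding VH_def by force
  then have "VH - X \<noteq> {}" by blast
  moreover have "(p, p') \<in> ?R\<^sup>*" if p: "p \<in> VH - X" "p' \<in> VH - X" for p p'
  proof -
    obtain b x where bx: "b \<in> VB - fst ` X" "x \<in> VG - {v}" "(p, (b, x)) \<in> ?R\<^sup>*"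
      using reach_intact_copy[OF X p(1)] .
    obtain b' x' where bx': "b' \<in> VB - fst ` X" "x' \<in> VG - {v}" "(p', (b', x')) \<in> ?R\<^sup>*"
      using reach_intact_copy[OF X p(2)] .
    have "(p, (b, x)) \<in> ?R\<^sup>*" "((b, x), (b', x')) \<in> ?R\<^sup>*" "((b', x'), p') \<in> ?R\<^sup>*"
      using bx intact_copies_connected[OF X bx(1) bx'(1) bx(2) bx'(2)] rtrancl_adj_in_sym[OF bx'(3)] by auto
    then show ?thesis by (meson rtrancl_trans)
  qed
  ultimately show "connected_induced (VH - X) EH endsH" unfolding connected_induced_def by blast
qed

section \<open>Colourings of the replacement\<close>

lemma coloring_on_copy:
  assumes c: "proper_edge_coloring 5 EH endsH c" and b: "b \<in> VB"
  shows "proper_edge_coloring 5 (EG - IG v) endsG (\<lambda>e. c (Inl (b, e)))"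
  unfolding proper_edge_coloring_def
proof (intro conjI ballI impI)
  have copy: "Inl (b, e) \<in> EH" if "e \<in> EG - IG v" for e using that b unfolding EH_def by auto
  then show "c (Inl (b, e)) \<in> {1..5}" if "e \<in> EG - IG v" for e
    using c that unfolding proper_edge_coloring_def by blast
  fix e e' assume e: "e \<in> EG - IG v" "e' \<in> EG - IG v" "e \<noteq> e' \<and> endsG e \<inter> endsG e' \<noteq> {}"
  then obtain w where "w \<in> endsG e" "w \<in> endsG e'" by blast
  then show "c (Inl (b, e)) \<noteq> c (Inl (b, e'))"
    using proper_edge_coloringD[OF c copy[OF e(1)] copy[OF e(2)], of "(b, w)"] e(3) by auto
qed

lemma color_set_copy:
  assumes b: "b \<in> VB" and w: "w \<noteq> v"
    and outside: "\<forall>e\<in>EG - IG v. c' e = c (Inl (b, e))"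
    and ports: "\<forall>f\<in>port_edges b w. c' (\<sigma> b f) = c (Inr f)"
  shows "color_set EG endsG c' w = color_set EH endsH c (b, w)"
proof -
  have "color_set EG endsG c' w = c' ` (IG w - IG v) \<union> c' ` (IG w \<inter> IG v)"
    unfolding color_set_def by blast
  also have "\<dots> = (\<lambda>e. c (Inl (b, e))) ` (IG w - IG v) \<union> (c \<circ> Inr) ` port_edges b w"
    using outside ports unfolding \<sigma>_port_edges[OF b w, symmetric] by (auto simp: image_image)
  finally show ?thesis unfolding color_set_def inc_edges_H[OF b] by (simp add: image_Un image_image)
qed

lemma abnormal_edges_outside_copy:
  assumes b: "b \<in> VB"
    and same: "\<And>w. w \<notin> insert v W \<Longrightarrow> color_set EG endsG c' w = color_set EH endsH c (b, w)"
  shows "abnormal_edges EG endsG c' \<subseteq> {e. Inl (b, e) \<in> abnormal_edges EH endsH c} \<union> IG v \<union> (\<Union>w\<in>W. IG w)"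
proof
  fix e assume e: "e \<in> abnormal_edges EG endsG c'"
  show "e \<in> {e. Inl (b, e) \<in> abnormal_edges EH endsH c} \<union> IG v \<union> (\<Union>w\<in>W. IG w)"
  proof (cases "endsG e \<inter> insert v W = {}")
    case True
    then have "(\<Union>w\<in>endsG e. color_set EG endsG c' w) = (\<Union>w\<in>endsG e. color_set EH endsH c (b, w))"
      by (intro SUP_cong refl same) (use True in auto)
    also have "\<dots> = (\<Union>p\<in>endsH (Inl (b, e)). color_set EH endsH c p)" by (simp add: image_image)
    finally have "Inl (b, e) \<in> abnormal_edges EH endsH c"
      using e True b unfolding abnormal_edges_def poor_edge_def rich_edge_def EH_def by auto
    then show ?thesis by simp
  qed (use e in \<open>auto simp: abnormal_edges_def\<close>)
qed

lemma card_abnormal_edges_outside_copy: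
  assumes b: "b \<in> VB" and e: "e \<in> IG v" "e' \<in> IG v"
    and same: "\<And>w. w \<notin> {v, other_end endsG v e, other_end endsG v e'} \<Longrightarrow>
      color_set EG endsG c' w = color_set EH endsH c (b, w)"
  shows "card (abnormal_edges EG endsG c') \<le> card {e. Inl (b, e) \<in> abnormal_edges EH endsH c} + 7"
proof -
  define A where "A = {e. Inl (b, e) \<in> abnormal_edges EH endsH c}"
  define N where "N = IG v \<union> IG (other_end endsG v e) \<union> IG (other_end endsG v e')"
  have "abnormal_edges EG endsG c' \<subseteq> A \<union> IG v \<union> (\<Union>w\<in>{other_end endsG v e, other_end endsG v e'}. IG w)"
    unfolding A_def using same by (intro abnormal_edges_outside_copy[OF b]) simp
  then have "abnormal_edges EG endsG c' \<subseteq> A \<union> N" unfolding N_def by auto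
  moreover have "finite (A \<union> N)"
  proof -
    have "A \<subseteq> EG" unfolding A_def abnormal_edges_def EH_def by auto
    then have "finite A" using multigraph_G finite_subset unfolding multigraph_def by blast
    then show ?thesis unfolding N_def using finite_inc_edges[OF multigraph_G] by simp
  qed
  ultimately have "card (abnormal_edges EG endsG c') \<le> card (A \<union> N)" by (simp add: card_mono)
  also have "\<dots> \<le> card A + card N" by (rule card_Un_le)
  also have "\<dots> \<le> card A + 7" unfolding N_def using card_edges_near_vertex[OF cubic_G v e] by simp
  finally show ?thesis unfolding A_def .
qed

lemma copy_coloring:
  assumes c: "proper_edge_coloring 5 EH endsH c" and b: "b \<in> VB"
  obtains c' where "proper_edge_coloring 5 EG endsG c'"
    "card (abnormal_edges EG endsG c') \<le> card {e. Inl (b, e) \<in> abnormal_edges EH endsH c} + 7"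
proof -
  obtain e\<^sub>1 e\<^sub>2 e\<^sub>3 where I: "IG v = {e\<^sub>1, e\<^sub>2, e\<^sub>3}" "e\<^sub>1 \<noteq> e\<^sub>2" "e\<^sub>2 \<noteq> e\<^sub>3" "e\<^sub>1 \<noteq> e\<^sub>3"
    using card_inc_edges_cubic[OF cubic_G v] unfolding card_3_iff by blast
  define x where "x e = other_end endsG v e" for e
  obtain f\<^sub>1 where f\<^sub>1: "f\<^sub>1 \<in> IB b" "\<sigma> b f\<^sub>1 = e\<^sub>1" using \<sigma>_surj[OF b] I(1) by blast
  have port_f\<^sub>1: "Inr f\<^sub>1 \<in> EH" "(b, x e\<^sub>1) \<in> endsH (Inr f\<^sub>1)"
    using f\<^sub>1 unfolding EH_def x_def by (auto simp: port_def)
  have "c (Inr f\<^sub>1) \<noteq> c (Inl (b, e))" if "e \<in> IG (x e\<^sub>1) - IG v" for e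
  proof (rule proper_edge_coloringD[OF c port_f\<^sub>1(1) _ _ port_f\<^sub>1(2)])
    show "Inl (b, e) \<in> EH" "(b, x e\<^sub>1) \<in> endsH (Inl (b, e))" using that b unfolding EH_def by auto
  qed simp
  then have "c (Inr f\<^sub>1) \<notin> (\<lambda>e. c (Inl (b, e))) ` (IG (x e\<^sub>1) - IG v)" by blast
  moreover have "c (Inr f\<^sub>1) \<in> {1..5}" using c port_f\<^sub>1(1) unfolding proper_edge_coloring_def by blast
  ultimately obtain c' where c': "proper_edge_coloring 5 EG endsG c'"
    "\<forall>e\<in>EG - IG v. c' e = c (Inl (b, e))" "c' e\<^sub>1 = c (Inr f\<^sub>1)"
    using extend_coloring_at_vertex[OF cubic_G I coloring_on_copy[OF c b]] unfolding x_def by blast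
  \<comment> \<open>The first edge at v inherits the colour of the edge of H at its other end, so colour
    sets can differ only at v and at the other two neighbours of v.\<close>
  have same_colors: "color_set EG endsG c' w = color_set EH endsH c (b, w)" if "w \<notin> {v, x e\<^sub>2, x e\<^sub>3}" for w
  proof (rule color_set_copy[OF b _ c'(2)])
    show "w \<noteq> v" using that by simp
    show "\<forall>f\<in>port_edges b w. c' (\<sigma> b f) = c (Inr f)"
    proof
      fix f assume f: "f \<in> port_edges b w"
      then have "\<sigma> b f \<in> IG v" "x (\<sigma> b f) = w" using \<sigma>_edge[OF b] unfolding port_edges_def x_def by auto
      then have "\<sigma> b f = e\<^sub>1" using I(1) that by auto
      then have "f = f\<^sub>1" using f f\<^sub>1 bij_\<sigma>[OF b] unfolding bij_betw_def port_edges_def by (auto dest: inj_onD)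
      then show "c' (\<sigma> b f) = c (Inr f)" using c'(3) f\<^sub>1(2) by simp
    qed
  qed
  have "e\<^sub>2 \<in> IG v" "e\<^sub>3 \<in> IG v" using I(1) by auto
  from card_abnormal_edges_outside_copy[OF b this same_colors[unfolded x_def]]
  show ?thesis using c'(1) that by blast
qed

lemma card_abnormal_edges_H:
  assumes bad: "\<forall>c. proper_edge_coloring 5 EG endsG c \<longrightarrow> 7 < card (abnormal_edges EG endsG c)"
    and c: "proper_edge_coloring 5 EH endsH c"
  shows "card VB \<le> card (abnormal_edges EH endsH c)"
proof -
  have "\<exists>e. Inl (b, e) \<in> abnormal_edges EH endsH c" if b: "b \<in> VB" for b
  proof -
    obtain c' where "proper_edge_coloring 5 EG endsG c'"
      "card (abnormal_edges EG endsG c') \<le> card {e. Inl (b, e) \<in> abnormal_edges EH endsH c} + 7"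
      using copy_coloring[OF c b] .
    then have "{e. Inl (b, e) \<in> abnormal_edges EH endsH c} \<noteq> {}" using bad by fastforce
    then show ?thesis by blast
  qed
  then obtain sel where sel: "\<And>b. b \<in> VB \<Longrightarrow> Inl (b, sel b) \<in> abnormal_edges EH endsH c" by metis
  have "finite (abnormal_edges EH endsH c)"
    using multigraph_H unfolding multigraph_def abnormal_edges_def by auto
  then show ?thesis using sel by (intro card_inj_on_le[of "\<lambda>b. Inl (b, sel b)"]) (auto simp: inj_on_def)
qed

end

section \<open>Blowing up a counterexample\<close>

lemma bad_graph_blowup:
  fixes VG EG VB EB :: "nat set" and endsG endsB :: "nat \<Rightarrow> nat set"
  assumes G: "cubic VG EG endsG" "k_connected 3 VG EG endsG"
    and bad: "\<forall>c. proper_edge_coloring 5 EG endsG c \<longrightarrow> 7 < card (abnormal_edges EG endsG c)"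
    and B: "cubic VB EB endsB" "k_connected 3 VB EB endsB"
  shows "\<exists>(V :: nat set) (E :: nat set) ends. cubic V E ends \<and> k_connected 3 V E ends \<and>
    card V = card VB * (card VG - 1) \<and>
    (\<forall>c. proper_edge_coloring 5 E ends c \<longrightarrow> card VB \<le> card (abnormal_edges E ends c))"
proof -
  obtain v where v: "v \<in> VG" using k_connected_card[OF G(2)] by fastforce
  have "\<exists>\<sigma>. bij_betw \<sigma> (inc_edges EB endsB b) (inc_edges EG endsG v)" if "b \<in> VB" for b
    using card_inc_edges_cubic[OF B(1) that] card_inc_edges_cubic[OF G(1) v]
      finite_inc_edges[OF cubic_multigraph[OF B(1)]] finite_inc_edges[OF cubic_multigraph[OF G(1)]]
    by (intro finite_same_card_bij) auto
  then obtain \<sigma> where "\<And>b. b \<in> VB \<Longrightarrow> bij_betw (\<sigma> b) (inc_edges EB endsB b) (inc_edges EG endsG v)"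
    by metis
  then interpret H: vertex_replacement VG EG endsG v VB EB endsB \<sigma>
    using G B v by unfold_locales
  define ends where "ends n = to_nat ` H.endsH (from_nat n)" for n
  interpret copy: graph_copy H.VH H.EH H.endsH to_nat to_nat ends
    by unfold_locales (auto simp: ends_def)
  have "card (to_nat ` H.VH) = card H.VH" by (simp add: card_image inj_on_subset[OF inj_to_nat])
  moreover have "card VB \<le> card (abnormal_edges (to_nat ` H.EH) ends c)"
    if "proper_edge_coloring 5 (to_nat ` H.EH) ends c" for c
    using H.card_abnormal_edges_H[OF bad copy.proper_edge_coloring[OF that]] copy.card_abnormal_edges by simp
  ultimately show ?thesis
    using copy.cubic[OF H.cubic_H] copy.k_connected[OF H.three_connected_H] H.card_VH by metis
qed

lemma large_bad_graph_blowups: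
  fixes VG EG :: "nat set" and endsG :: "nat \<Rightarrow> nat set"
  assumes G: "cubic VG EG endsG" "k_connected 3 VG EG endsG"
    and bad: "\<forall>c. proper_edge_coloring 5 EG endsG c \<longrightarrow> 7 < card (abnormal_edges EG endsG c)"
  shows "\<exists>(V :: nat set) (E :: nat set) ends. cubic V E ends \<and> k_connected 3 V E ends \<and> N \<le> card V \<and>
    (\<forall>c. proper_edge_coloring 5 E ends c \<longrightarrow> card V \<le> (card VG - 1) * card (abnormal_edges E ends c))"
proof -
  have "\<exists>(VB :: nat set) (EB :: nat set) endsB. cubic VB EB endsB \<and> k_connected 3 VB EB endsB \<and> N \<le> card VB"
  proof (induction N)
    case 0
    then show ?case using G by blast
  next
    case (Suc N)
    then obtain VB EB :: "nat set" and endsB where B: "cubic VB EB endsB" "k_connected 3 VB EB endsB" "N \<le> card VB"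
      by blast
    then obtain V E ends where H: "cubic V E ends" "k_connected 3 (V :: nat set) (E :: nat set) ends"
      "card V = card VB * (card VG - 1)" using bad_graph_blowup[OF G bad B(1,2)] by blast
    have "card VB * 1 < card VB * (card VG - 1)"
      using k_connected_card[OF G(2)] k_connected_card[OF B(2)] by (intro mult_less_mono2) auto
    then have "Suc N \<le> card V" using H(3) B(3) by linarith
    then show ?case using H(1,2) by blast
  qed
  then obtain VB EB :: "nat set" and endsB where B: "cubic VB EB endsB" "k_connected 3 VB EB endsB" "N \<le> card VB"
    by blast
  obtain V E ends where H: "cubic V E ends" "k_connected 3 (V :: nat set) (E :: nat set) ends"
    "card V = card VB * (card VG - 1)"
    "\<forall>c. proper_edge_coloring 5 E ends c \<longrightarrow> card VB \<le> card (abnormal_edges E ends c)"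
    using bad_graph_blowup[OF G bad B(1,2)] by blast
  have "card VB * 1 \<le> card VB * (card VG - 1)"
    using k_connected_card[OF G(2)] by (intro mult_le_mono2) linarith
  then have "N \<le> card V" using H(3) B(3) by linarith
  moreover have "card V \<le> (card VG - 1) * card (abnormal_edges E ends c)"
    if "proper_edge_coloring 5 E ends c" for c
    using H(3,4) that by (simp add: mult.commute)
  ultimately show ?thesis using H(1,2) by blast
qed

lemma sublinear_eventually_less:
  assumes "sublinear f" "0 < m"
  obtains N where "\<And>n. N \<le> n \<Longrightarrow> m * f n < n"
proof -
  have lim: "(\<lambda>n. real (f n) / real n) \<longlonglongrightarrow> 0" using assms(1) unfolding sublinear_def .
  have "0 < 1 / real m" using assms(2) by simp
  then obtain N where N: "\<forall>n\<ge>N. norm (real (f n) / real n - 0) < 1 / real m"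
    using LIMSEQ_D[OF lim] by blast
  have "m * f n < n" if "max N 1 \<le> n" for n
  proof -
    have "norm (real (f n) / real n - 0) < 1 / real m" using N that by simp
    then have "real (f n) / real n < 1 / real m" unfolding real_norm_def by linarith
    moreover have "0 < real n" using that by simp
    ultimately have "real m * real (f n) < real n" using assms(2) by (simp add: field_simps)
    then show ?thesis by (metis of_nat_less_iff of_nat_mult)
  qed
  then show ?thesis by (rule that)
qed

definition abnormal_bound :: "(nat \<Rightarrow> nat) \<Rightarrow> bool" where
  "abnormal_bound g \<longleftrightarrow> (\<forall>(V :: nat set) (E :: nat set) ends. cubic V E ends \<and> k_connected 3 V E ends \<longrightarrow>
     (\<exists>c. proper_edge_coloring 5 E ends c \<and> card (abnormal_edges E ends c) \<le> g (card V)))"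

lemma sublinear_abnormal_bound_imp_7:
  assumes f: "sublinear f" "abnormal_bound f"
  shows "abnormal_bound (\<lambda>_. 7)"
  unfolding abnormal_bound_def
proof (intro allI impI, rule ccontr)
  fix VG EG :: "nat set" and endsG :: "nat \<Rightarrow> nat set"
  assume G: "cubic VG EG endsG \<and> k_connected 3 VG EG endsG"
    and "\<not> (\<exists>c. proper_edge_coloring 5 EG endsG c \<and> card (abnormal_edges EG endsG c) \<le> 7)"
  then have bad: "\<forall>c. proper_edge_coloring 5 EG endsG c \<longrightarrow> 7 < card (abnormal_edges EG endsG c)"
    by auto
  have "0 < card VG - 1" using k_connected_card[OF conjunct2[OF G]] by simp
  then obtain N where N: "\<And>n. N \<le> n \<Longrightarrow> (card VG - 1) * f n < n"
    using sublinear_eventually_less[OF f(1)] by blast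
  obtain V E ends where H: "cubic V E ends" "k_connected 3 (V :: nat set) (E :: nat set) ends" "N \<le> card V"
    "\<forall>c. proper_edge_coloring 5 E ends c \<longrightarrow> card V \<le> (card VG - 1) * card (abnormal_edges E ends c)"
    using large_bad_graph_blowups[OF conjunct1[OF G] conjunct2[OF G] bad] by blast
  obtain c where c: "proper_edge_coloring 5 E ends c" "card (abnormal_edges E ends c) \<le> f (card V)"
    using f(2) H(1,2) unfolding abnormal_bound_def by blast
  have "card V \<le> (card VG - 1) * card (abnormal_edges E ends c)" using H(4) c(1) by blast
  also have "\<dots> \<le> (card VG - 1) * f (card V)" using c(2) by (rule mult_le_mono2)
  finally show False using N[OF H(3)] by linarith
qed

theorem mainTheorem3:
  shows "(\<forall>(V :: nat set) (E :: nat set) ends. cubic V E ends \<and> k_connected 3 V E ends \<longrightarrow>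
            (\<exists>c. proper_edge_coloring 5 E ends c \<and> card (abnormal_edges E ends c) \<le> 7))
     \<longleftrightarrow>
     (\<exists>f. sublinear f \<and>
        (\<forall>(V :: nat set) (E :: nat set) ends. cubic V E ends \<and> k_connected 3 V E ends \<longrightarrow>
            (\<exists>c. proper_edge_coloring 5 E ends c \<and> card (abnormal_edges E ends c) \<le> f (card V))))"
proof -
  have "sublinear (\<lambda>_. 7)" unfolding sublinear_def using lim_const_over_n[of "7::real"] by simp
  then have "abnormal_bound (\<lambda>_. 7) \<longleftrightarrow> (\<exists>f. sublinear f \<and> abnormal_bound f)"
    using sublinear_abnormal_bound_imp_7 by blast
  then show ?thesis unfolding abnormal_bound_def .
qed

end
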